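(* Consider online caching with catalogue size $N$, cache capacity $C<N/2$, batch size $B$ and horizon $T$. Suppose that at each slot $t$ the system samples $l<B$ requests uniformly at random from the batch of $B$ requests (independently across slots and of the algorithm's perturbations), lets $\hat d_t\in\mathbb{N}^N$ be the vector counting, for each file, the number of sampled requests for that file, and uses the estimator $\hat r_t=\frac{B}{l}\hat d_t$ (which satisfies $\mathbb{E}[\hat r_t]=r_t$). Then NFPL with $\eta=B\sqrt{T/(2C)}$ satisfies $$\bar{\mathcal{R}}_T(\mathrm{NFPL})\le 2\sqrt{2}\,B\sqrt{C\,T}.$$
   Context: Online caching setting: files are indexed by $\{1,\dots,N\}$. At each time slot $t=1,\dots,T$ a batch of $B$ requests arrives, summarized by $r_t\in\mathbb{N}^N$ with $r_{t,i}$ the number of requests for file $i$ and $\sum_i r_{t,i}=B$; the sequence $r_1,\dots,r_T$ is fixed in advance (oblivious). The decision set is the capped simplex $\mathcal{X}=\{x\in[0,1]^N:\sum_{i=1}^N x_i=C\}$ and the cost of decision $x$ at slot $t$ is $\langle r_t,x\rangle$. For $s\in\mathbb{R}^N$, $M(s)\in\arg\min_{x\in\mathcal{X}}\langle s,x\rangle$. The NFPL algorithm with parameter $\eta$: at each slot $t$ draw $\gamma_t$ uniformly from $[0,\eta]^N$ (independently), play $x_t=M\big(\sum_{s<t}\hat r_s+\gamma_t\big)$, then observe $\hat r_t$. The (weak/pseudo) regret is $\bar{\mathcal{R}}_T=\mathbb{E}\big[\sum_{t=1}^T\langle r_t,x_t\rangle\big]-\min_{x\in\mathcal{X}}\sum_{t=1}^T\langle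 r_t,x\rangle$, expectation over all the algorithm's randomness, including the sampling. *)

theory Defs
  imports "HOL-Probability.Probability"
begin

text \<open>Files are indexed by a finite type 'n, so N = CARD('n); vectors in R^N are real^'n.
  A request sequence is given by req t j :: 'n, the file requested by the j-th request
  (j < B) of the batch at slot t.\<close>

definition req_count :: "(nat \<Rightarrow> nat \<Rightarrow> 'n::finite) \<Rightarrow> nat \<Rightarrow> nat \<Rightarrow> real^'n" where
  "req_count req B t = (\<chi> i. real (card {j. j < B \<and> req t j = i}))"

definition capped_simplex :: "nat \<Rightarrow> (real^'n::finite) set" where
  "capped_simplex C = {x. (\<forall>i. 0 \<le> x $ i \<and> x $ i \<le> 1) \<and> (\<Sum>i\<in>UNIV. x $ i) = real C}"

definition is_min_oracle :: "nat \<Rightarrow> (real^'n::finite \<Rightarrow> real^'n) \<Rightarrow> bool" where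
  "is_min_oracle C M \<longleftrightarrow>
     (\<forall>s. M s \<in> capped_simplex C \<and> (\<forall>y\<in>capped_simplex C. s \<bullet> M s \<le> s \<bullet> y))"

definition sample_pmf :: "nat \<Rightarrow> nat \<Rightarrow> nat set pmf" where
  "sample_pmf B l = pmf_of_set {S. S \<subseteq> {..<B} \<and> card S = l}"

definition rhat :: "(nat \<Rightarrow> nat \<Rightarrow> 'n::finite) \<Rightarrow> nat \<Rightarrow> nat \<Rightarrow> nat \<Rightarrow> nat set \<Rightarrow> real^'n" where
  "rhat req B l t S = (\<chi> i. (real B / real l) * real (card {j\<in>S. req t j = i}))"

definition slot_measure :: "nat \<Rightarrow> nat \<Rightarrow> real \<Rightarrow> (nat set \<times> (real^'n::finite)) measure" where
  "slot_measure B l \<eta> =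
     measure_pmf (sample_pmf B l) \<Otimes>\<^sub>M uniform_measure lborel (cbox 0 (\<chi> i. \<eta>))"

definition nfpl_space :: "nat \<Rightarrow> nat \<Rightarrow> real \<Rightarrow> nat \<Rightarrow> (nat \<Rightarrow> nat set \<times> (real^'n::finite)) measure" where
  "nfpl_space B l \<eta> T = PiM {1..T} (\<lambda>t. slot_measure B l \<eta>)"

definition nfpl_decision ::
  "(real^'n::finite \<Rightarrow> real^'n) \<Rightarrow> (nat \<Rightarrow> nat \<Rightarrow> 'n) \<Rightarrow> nat \<Rightarrow> nat \<Rightarrow> nat
     \<Rightarrow> (nat \<Rightarrow> nat set \<times> (real^'n)) \<Rightarrow> real^'n" where
  "nfpl_decision M req B l t \<omega> =
     M ((\<Sum>s\<in>{1..<t}. rhat req B l s (fst (\<omega> s))) + snd (\<omega> t))"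

definition nfpl_regret ::
  "nat \<Rightarrow> (real^'n::finite \<Rightarrow> real^'n) \<Rightarrow> (nat \<Rightarrow> nat \<Rightarrow> 'n) \<Rightarrow> nat \<Rightarrow> nat \<Rightarrow> real \<Rightarrow> nat \<Rightarrow> real" where
  "nfpl_regret C M req B l \<eta> T =
     (\<integral>\<omega>. (\<Sum>t\<in>{1..T}. req_count req B t \<bullet> nfpl_decision M req B l t \<omega>) \<partial>nfpl_space B l \<eta> T)
     - (INF x\<in>capped_simplex C. \<Sum>t\<in>{1..T}. req_count req B t \<bullet> x)"

end

theory Submission
  imports Defs
begin

text \<open>
  NFPL is analysed through the smoothed minimum
  \<open>\<Phi>(R) = E\<^sub>\<gamma> min\<^bsub>x \<in> X\<^esub> \<langle>R + \<gamma>, x\<rangle>\<close>, with \<open>\<gamma>\<close> uniform on \<open>[0, \<eta>]\<^sup>N\<close>.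
  For \<open>w \<ge> 0\<close> the minimiser at \<open>R + \<gamma> + w\<close> is feasible at \<open>R + \<gamma>\<close>, so
  \<open>\<langle>w, M (R + \<gamma> + w)\<rangle> \<le> min (R + \<gamma> + w) - min (R + \<gamma>)\<close>. Moving the perturbation back from
  \<open>\<gamma> + w\<close> to \<open>\<gamma>\<close> costs at most \<open>\<parallel>w\<parallel>\<^sub>1\<close> times the fraction of the cube not covered by its
  translate by \<open>w\<close>, which is at most \<open>\<parallel>w\<parallel>\<^sub>1 / \<eta>\<close>. Hence
  \<open>E\<^sub>\<gamma> \<langle>w, M (R + \<gamma>)\<rangle> \<le> \<Phi>(R + w) - \<Phi>(R) + \<parallel>w\<parallel>\<^sub>1\<^sup>2 / \<eta>\<close>.

  The estimates \<open>r\<^sub>t\<close> are unbiased and satisfy \<open>\<parallel>r\<^sub>t\<parallel>\<^sub>1 = B\<close>. Averaging over the sample, the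
  loss incurred so far plus the potential \<open>\<langle>R\<^sub>t, x\<rangle> + C \<eta> - \<Phi>(R\<^sub>t)\<close> of the cumulative
  estimate \<open>R\<^sub>t\<close> grows in expectation by at most \<open>\<langle>r\<^sub>t, x\<rangle> + B\<^sup>2 / \<eta>\<close> per slot, for every
  comparator \<open>x\<close>. As the potential is nonnegative and initially at most \<open>C \<eta>\<close>, the regret is
  at most \<open>C \<eta> + T B\<^sup>2 / \<eta>\<close>, which is \<open>(3 / \<surd>2) B \<surd>(C T)\<close> for the chosen \<open>\<eta>\<close>.
\<close>

section \<open>Linear minimisation over the capped simplex\<close>

lemma capped_simplex_nonempty:
  assumes "C \<le> CARD('n::finite)"
  shows "capped_simplex C \<noteq> ({} :: (real^'n) set)"
proof -
  have "(\<chi> i. real C / real CARD('n)) \<in> (capped_simplex C :: (real^'n) set)"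
    using assms by (auto simp: capped_simplex_def)
  then show ?thesis by blast
qed

lemma inner_capped_simplex_nonneg:
  assumes "x \<in> capped_simplex C" and "\<And>i. 0 \<le> w $ i"
  shows "0 \<le> w \<bullet> x"
  using assms unfolding inner_vec_def by (auto intro!: sum_nonneg simp: capped_simplex_def)

lemma inner_capped_simplex_le_sum:
  assumes "x \<in> capped_simplex C" and "\<And>i. 0 \<le> w $ i"
  shows "w \<bullet> x \<le> (\<Sum>i\<in>UNIV. w $ i)"
  using assms unfolding inner_vec_def
  by (auto intro!: sum_mono mult_left_le simp: capped_simplex_def)

lemma inner_capped_simplex_le_bound:
  assumes "x \<in> capped_simplex C" and "\<And>i. w $ i \<le> b"
  shows "w \<bullet> x \<le> real C * b"
proof -
  have "w \<bullet> x \<le> (\<Sum>i\<in>UNIV. b * x $ i)"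
    using assms unfolding inner_vec_def by (auto intro!: sum_mono mult_right_mono simp: capped_simplex_def)
  also have "\<dots> = real C * b"
    using assms by (simp add: sum_distrib_left[symmetric] capped_simplex_def)
  finally show ?thesis .
qed

lemma abs_inner_capped_simplex_le:
  assumes "x \<in> capped_simplex C"
  shows "\<bar>s \<bullet> x\<bar> \<le> (\<Sum>i\<in>UNIV. \<bar>s $ i\<bar>)"
proof -
  have "\<bar>s \<bullet> x\<bar> \<le> (\<Sum>i\<in>UNIV. \<bar>s $ i\<bar> * \<bar>x $ i\<bar>)"
    unfolding inner_vec_def by (simp add: sum_abs flip: abs_mult)
  also have "\<dots> \<le> (\<Sum>i\<in>UNIV. \<bar>s $ i\<bar>)"
    using assms by (auto intro!: sum_mono mult_left_le simp: capped_simplex_def)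
  finally show ?thesis .
qed

definition min_value :: "(real^'n::finite \<Rightarrow> real^'n) \<Rightarrow> real^'n \<Rightarrow> real" where
  "min_value M s = s \<bullet> M s"

lemma borel_measurable_min_value [measurable]:
  "M \<in> borel_measurable borel \<Longrightarrow> min_value M \<in> borel_measurable borel"
  unfolding min_value_def by measurable

locale min_oracle =
  fixes C :: nat and M :: "real^'n::finite \<Rightarrow> real^'n"
  assumes is_min_oracle: "is_min_oracle C M"
begin

lemma min_oracle_in_capped_simplex: "M s \<in> capped_simplex C"
  using is_min_oracle by (simp add: is_min_oracle_def)

lemma min_value_le: "y \<in> capped_simplex C \<Longrightarrow> min_value M s \<le> s \<bullet> y"
  using is_min_oracle by (simp add: is_min_oracle_def min_value_def)

lemma inner_min_oracle_le_min_value_diff: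
  "w \<bullet> M (s + w) \<le> min_value M (s + w) - min_value M s"
  using min_value_le[OF min_oracle_in_capped_simplex, of s "s + w"]
  by (simp add: min_value_def inner_add_left)

lemma abs_min_value_le: "\<bar>min_value M s\<bar> \<le> (\<Sum>i\<in>UNIV. \<bar>s $ i\<bar>)"
  unfolding min_value_def by (rule abs_inner_capped_simplex_le[OF min_oracle_in_capped_simplex])

end

section \<open>Uniform perturbation on a cube\<close>

lemma measure_lborel_cbox_origin:
  fixes b :: "real^'n::finite"
  assumes "\<And>i. 0 \<le> b $ i"
  shows "measure lborel (cbox 0 b) = (\<Prod>i\<in>UNIV. b $ i)"
proof -
  have "0 \<in> cbox 0 b" using assms by (simp add: mem_box_cart)
  then show ?thesis by (auto simp: content_cbox_if_cart)
qed

definition cube :: "real \<Rightarrow> (real^'n::finite) set" where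
  "cube \<eta> = cbox 0 (\<chi> i. \<eta>)"

lemma mem_cube: "x \<in> cube \<eta> \<longleftrightarrow> (\<forall>i. 0 \<le> x $ i \<and> x $ i \<le> \<eta>)"
  by (simp add: cube_def mem_box_cart)

lemma cube_sets [measurable]: "cube \<eta> \<in> sets borel"
  by (simp add: cube_def)

lemma emeasure_cube:
  assumes "0 \<le> \<eta>"
  shows "emeasure lborel (cube \<eta> :: (real^'n::finite) set) = ennreal (\<eta> ^ CARD('n))"
proof -
  have "emeasure lborel (cube \<eta> :: (real^'n) set) = measure lborel (cube \<eta> :: (real^'n) set)"
    unfolding cube_def using emeasure_lborel_cbox_finite
    by (intro emeasure_eq_ennreal_measure) (auto simp: less_top)
  also have "measure lborel (cube \<eta> :: (real^'n) set) = \<eta> ^ CARD('n)"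
    using assms by (simp add: cube_def measure_lborel_cbox_origin)
  finally show ?thesis .
qed

definition perturbation :: "real \<Rightarrow> (real^'n::finite) measure" where
  "perturbation \<eta> = uniform_measure lborel (cube \<eta>)"

lemma sets_perturbation [simp, measurable_cong]: "sets (perturbation \<eta>) = sets borel"
  by (simp add: perturbation_def)

lemma space_perturbation [simp]: "space (perturbation \<eta>) = UNIV"
  by (simp add: perturbation_def)

lemma prob_space_perturbation: "0 < \<eta> \<Longrightarrow> prob_space (perturbation \<eta>)"
  unfolding perturbation_def by (intro prob_space_uniform_measure) (auto simp: emeasure_cube)

lemma AE_perturbation_in_cube: "AE x in perturbation \<eta>. x \<in> cube \<eta>"
  unfolding perturbation_def by (rule AE_uniform_measureI) auto

lemma integrable_perturbation_bounded:
  fixes f :: "real^'n::finite \<Rightarrow> real"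
  assumes "0 < \<eta>" and "f \<in> borel_measurable borel" and "\<And>x. x \<in> cube \<eta> \<Longrightarrow> \<bar>f x\<bar> \<le> K"
  shows "integrable (perturbation \<eta>) f"
proof -
  interpret prob_space "perturbation \<eta> :: (real^'n) measure"
    using assms(1) by (rule prob_space_perturbation)
  show ?thesis
  proof (rule integrable_const_bound)
    show "AE x in perturbation \<eta>. norm (f x) \<le> K"
      using AE_perturbation_in_cube by eventually_elim (use assms(3) in auto)
  qed (use assms(2) in simp)
qed

lemma integral_perturbation:
  fixes g :: "real^'n::finite \<Rightarrow> real"
  assumes "0 < \<eta>" and [measurable]: "g \<in> borel_measurable borel"
  shows "(\<integral>x. g x \<partial>perturbation \<eta>) = (\<integral>x. indicator (cube \<eta>) x * g x \<partial>lborel) / \<eta> ^ CARD('n)"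
proof -
  have density: "(perturbation \<eta> :: (real^'n) measure) = density lborel (\<lambda>x. ennreal (indicator (cube \<eta>) x / \<eta> ^ CARD('n)))"
    unfolding perturbation_def uniform_measure_def
    using assms(1) by (intro arg_cong[where f="density lborel"] ext)
      (auto simp: emeasure_cube indicator_def divide_ennreal[of 1, simplified])
  have "(\<integral>x. g x \<partial>perturbation \<eta>) = (\<integral>x. (indicator (cube \<eta>) x / \<eta> ^ CARD('n)) *\<^sub>R g x \<partial>lborel)"
    unfolding density using assms(1) by (intro integral_density) auto
  then show ?thesis
    unfolding real_scaleR_def by (subst integral_divide_zero[symmetric]) (auto intro!: integral_cong)
qed

text \<open>For \<open>v \<ge> 0\<close> the slabs \<open>i\<close> cover the part of the cube outside its translate by \<open>v\<close>.\<close>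
definition cube_slab :: "real \<Rightarrow> real^'n::finite \<Rightarrow> 'n \<Rightarrow> (real^'n) set" where
  "cube_slab \<eta> v i = cbox 0 (\<chi> j. if j = i then v $ i else \<eta>)"

lemma measure_cube_slab:
  fixes v :: "real^'n::finite"
  assumes "0 \<le> v $ i" and "0 \<le> \<eta>"
  shows "measure lborel (cube_slab \<eta> v i) = v $ i * \<eta> ^ (CARD('n) - 1)"
proof -
  have "measure lborel (cube_slab \<eta> v i) = (\<Prod>j\<in>UNIV. if j = i then v $ i else \<eta>)"
    using assms unfolding cube_slab_def by (subst measure_lborel_cbox_origin) auto
  also have "\<dots> = v $ i * \<eta> ^ (CARD('n) - 1)"
    by (simp add: prod.remove[of UNIV i] card_Diff_singleton)
  finally show ?thesis .
qed

lemma integrable_cube_slab: "integrable lborel (\<lambda>x. indicator (cube_slab \<eta> v i) x :: real)"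
  unfolding cube_slab_def using emeasure_lborel_cbox_finite
  by (intro integrable_real_indicator) (auto simp: less_top)

lemma indicator_cube_diff_mult_le:
  fixes x v :: "real^'n::finite" and y K :: real
  assumes v: "\<And>i. 0 \<le> v $ i" and "0 \<le> y" and "y \<le> K"
  shows "(indicator (cube \<eta>) x - indicator (cube \<eta>) (x - v)) * y
           \<le> K * (\<Sum>i\<in>UNIV. indicator (cube_slab \<eta> v i) x)"
proof (cases "x \<in> cube \<eta> \<and> x - v \<notin> cube \<eta>")
  case True
  then have x: "\<forall>j. 0 \<le> x $ j \<and> x $ j \<le> \<eta>"
    by (simp add: mem_cube)
  obtain i where "\<not> (0 \<le> (x - v) $ i \<and> (x - v) $ i \<le> \<eta>)"
    using True by (auto simp: mem_cube)
  then have "x $ i < v $ i"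
    using spec[OF x, of i] v[of i] by auto
  with x have "x \<in> cube_slab \<eta> v i"
    by (auto simp: cube_slab_def mem_box_cart less_imp_le)
  then have "1 \<le> (\<Sum>i\<in>UNIV. indicator (cube_slab \<eta> v i) x :: real)"
    by (intro member_le_sum[of i, THEN order_trans[rotated]]) auto
  then have "K * 1 \<le> K * (\<Sum>i\<in>UNIV. indicator (cube_slab \<eta> v i) x)"
    using assms by (intro mult_left_mono) auto
  then show ?thesis
    using True assms by simp
next
  case False
  then have "(indicator (cube \<eta>) x - indicator (cube \<eta>) (x - v)) * y \<le> 0"
    using assms by (auto simp: indicator_def)
  also have "0 \<le> K * (\<Sum>i\<in>UNIV. indicator (cube_slab \<eta> v i) x :: real)"
    using assms by (intro mult_nonneg_nonneg sum_nonneg) auto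
  finally show ?thesis .
qed

lemma integrable_indicator_cube_shift_mult:
  fixes g :: "real^'n::finite \<Rightarrow> real"
  assumes [measurable]: "g \<in> borel_measurable borel" and "\<And>x. \<bar>g x\<bar> \<le> K"
  shows "integrable lborel (\<lambda>x. indicator (cube \<eta>) (x - u) * g x)"
proof (rule Bochner_Integration.integrable_bound)
  show "integrable lborel (\<lambda>x. K * indicator (cbox u (\<chi> i. u $ i + \<eta>)) x :: real)"
    using emeasure_lborel_cbox_finite by (intro integrable_mult_right integrable_real_indicator) auto
  have "x - u \<in> cube \<eta> \<Longrightarrow> x \<in> cbox u (\<chi> i. u $ i + \<eta>)" for x
    by (simp add: mem_cube mem_box_cart algebra_simps)
  then show "AE x in lborel. norm (indicator (cube \<eta>) (x - u) * g x)
      \<le> norm (K * indicator (cbox u (\<chi> i. u $ i + \<eta>)) x :: real)"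
    using assms(2) by (intro AE_I2) (auto simp: indicator_def intro: order_trans[OF _ abs_ge_self])
qed measurable

lemma integral_indicator_cube_diff_le:
  fixes g :: "real^'n::finite \<Rightarrow> real" and v :: "real^'n"
  assumes "0 \<le> \<eta>" and g_measurable [measurable]: "g \<in> borel_measurable borel"
    and g: "\<And>x. 0 \<le> g x" "\<And>x. g x \<le> K" and v: "\<And>i. 0 \<le> v $ i"
  shows "(\<integral>x. indicator (cube \<eta>) x * g x \<partial>lborel) - (\<integral>x. indicator (cube \<eta>) (x - v) * g x \<partial>lborel)
           \<le> K * (\<Sum>i\<in>UNIV. v $ i) * \<eta> ^ (CARD('n) - 1)"
proof -
  have bounded: "\<bar>g x\<bar> \<le> K" for x
    using g[of x] by simp
  note integrable = integrable_indicator_cube_shift_mult[OF g_measurable bounded, where u=0]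
    integrable_indicator_cube_shift_mult[OF g_measurable bounded, where u=v]
  have "(\<integral>x. indicator (cube \<eta>) x * g x \<partial>lborel) - (\<integral>x. indicator (cube \<eta>) (x - v) * g x \<partial>lborel)
      = (\<integral>x. (indicator (cube \<eta>) x - indicator (cube \<eta>) (x - v)) * g x \<partial>lborel)"
    using integrable by (simp add: left_diff_distrib)
  also have "\<dots> \<le> (\<integral>x. K * (\<Sum>i\<in>UNIV. indicator (cube_slab \<eta> v i) x) \<partial>lborel)"
    using integrable v g
    by (intro Bochner_Integration.integral_mono indicator_cube_diff_mult_le)
      (auto simp: left_diff_distrib integrable_cube_slab)
  also have "\<dots> = K * (\<Sum>i\<in>UNIV. measure lborel (cube_slab \<eta> v i))"
    by (simp add: integrable_cube_slab)
  also have "\<dots> = K * (\<Sum>i\<in>UNIV. v $ i) * \<eta> ^ (CARD('n) - 1)"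
    using assms by (simp add: measure_cube_slab sum_distrib_right)
  finally show ?thesis .
qed

lemma integral_perturbation_shift_le:
  fixes g :: "real^'n::finite \<Rightarrow> real" and v :: "real^'n"
  assumes \<eta>: "0 < \<eta>" and [measurable]: "g \<in> borel_measurable borel"
    and g: "\<And>x. 0 \<le> g x" "\<And>x. g x \<le> K" and v: "\<And>i. 0 \<le> v $ i"
  shows "(\<integral>x. g x \<partial>perturbation \<eta>) - (\<integral>x. g (x + v) \<partial>perturbation \<eta>) \<le> K * (\<Sum>i\<in>UNIV. v $ i) / \<eta>"
proof -
  have "(\<integral>x. indicator (cube \<eta>) x * g (x + v) \<partial>lborel) = (\<integral>x. indicator (cube \<eta>) (x - v) * g x \<partial>lborel)"
    using integral_distr[of "(+) v" lborel borel "\<lambda>x. indicator (cube \<eta>) (x - v) * g x"]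
    by (simp add: lborel_distr_plus add.commute)
  then have "(\<integral>x. indicator (cube \<eta>) x * g x \<partial>lborel) - (\<integral>x. indicator (cube \<eta>) x * g (x + v) \<partial>lborel)
      \<le> K * (\<Sum>i\<in>UNIV. v $ i) * \<eta> ^ (CARD('n) - 1)"
    using integral_indicator_cube_diff_le[OF less_imp_le[OF \<eta>] _ g v] by simp
  moreover have "\<eta> ^ CARD('n) = \<eta> * \<eta> ^ (CARD('n) - 1)"
    by (simp flip: power_Suc)
  ultimately show ?thesis
    using \<eta> by (simp add: integral_perturbation diff_divide_distrib[symmetric] divide_le_eq field_simps)
qed

section \<open>The smoothed minimum\<close>

locale smoothed_min_oracle = min_oracle C M
  for C :: nat and M :: "real^'n::finite \<Rightarrow> real^'n" +
  fixes \<eta> :: real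
  assumes M_measurable [measurable]: "M \<in> borel_measurable borel"
    and eta_pos: "0 < \<eta>"
begin

sublocale perturbation: prob_space "perturbation \<eta> :: (real^'n) measure"
  using eta_pos by (rule prob_space_perturbation)

definition smoothed_min :: "real^'n \<Rightarrow> real" where
  "smoothed_min R = (\<integral>\<gamma>. min_value M (R + \<gamma>) \<partial>perturbation \<eta>)"

lemma integrable_inner_min_oracle:
  "f \<in> borel_measurable borel \<Longrightarrow> integrable (perturbation \<eta>) (\<lambda>\<gamma>. w \<bullet> M (f \<gamma>))"
  using eta_pos by (rule integrable_perturbation_bounded)
    (auto intro: abs_inner_capped_simplex_le[OF min_oracle_in_capped_simplex])

lemma integrable_min_value: "integrable (perturbation \<eta>) (\<lambda>\<gamma>. min_value M (R + \<gamma>))"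
proof (rule integrable_perturbation_bounded[OF eta_pos])
  fix \<gamma> :: "real^'n"
  assume "\<gamma> \<in> cube \<eta>"
  then have "0 \<le> \<gamma> $ i \<and> \<gamma> $ i \<le> \<eta>" for i
    by (simp add: mem_cube)
  then have "\<bar>(R + \<gamma>) $ i\<bar> \<le> \<bar>R $ i\<bar> + \<eta>" for i
    by (smt (verit) vector_add_component)
  then have "(\<Sum>i\<in>UNIV. \<bar>(R + \<gamma>) $ i\<bar>) \<le> (\<Sum>i\<in>UNIV. \<bar>R $ i\<bar> + \<eta>)"
    by (rule sum_mono)
  then show "\<bar>min_value M (R + \<gamma>)\<bar> \<le> (\<Sum>i\<in>UNIV. \<bar>R $ i\<bar> + \<eta>)"
    using abs_min_value_le[of "R + \<gamma>"] by linarith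
qed measurable

lemma borel_measurable_smoothed_min [measurable]: "smoothed_min \<in> borel_measurable borel"
proof -
  have "(\<lambda>(R, \<gamma>). min_value M (R + \<gamma>)) \<in> borel_measurable (borel \<Otimes>\<^sub>M perturbation \<eta>)"
    by (simp add: measurable_cong_sets[OF sets_pair_measure_cong[OF refl sets_perturbation] refl])
  then show ?thesis
    unfolding smoothed_min_def[abs_def] by (rule perturbation.borel_measurable_lebesgue_integral)
qed

lemma smoothed_min_le:
  assumes x: "x \<in> capped_simplex C"
  shows "smoothed_min R \<le> R \<bullet> x + real C * \<eta>"
  unfolding smoothed_min_def
proof (rule perturbation.integral_le_const[OF integrable_min_value])
  show "AE \<gamma> in perturbation \<eta>. min_value M (R + \<gamma>) \<le> R \<bullet> x + real C * \<eta>"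
    using AE_perturbation_in_cube
  proof eventually_elim
    case (elim \<gamma>)
    then have "\<gamma> \<bullet> x \<le> real C * \<eta>"
      by (intro inner_capped_simplex_le_bound[OF x]) (simp add: mem_cube)
    with min_value_le[OF x, of "R + \<gamma>"] show ?case
      by (simp add: inner_add_left)
  qed
qed

lemma smoothed_min_zero_nonneg: "0 \<le> smoothed_min 0"
  unfolding smoothed_min_def
proof (rule integral_nonneg_AE)
  show "AE \<gamma> in perturbation \<eta>. 0 \<le> min_value M (0 + \<gamma>)"
    using AE_perturbation_in_cube
    by eventually_elim
      (auto simp: min_value_def mem_cube intro: inner_capped_simplex_nonneg[OF min_oracle_in_capped_simplex])
qed

lemma expected_inner_min_oracle_le:
  assumes w: "\<And>i. 0 \<le> w $ i"
  shows "(\<integral>\<gamma>. w \<bullet> M (R + \<gamma>) \<partial>perturbation \<eta>)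
           \<le> smoothed_min (R + w) - smoothed_min R + (\<Sum>i\<in>UNIV. w $ i)\<^sup>2 / \<eta>"
proof -
  define g where "g \<gamma> = w \<bullet> M (R + \<gamma>)" for \<gamma>
  have g_measurable [measurable]: "g \<in> borel_measurable borel"
    unfolding g_def by measurable
  have g_bounds: "0 \<le> g \<gamma>" "g \<gamma> \<le> (\<Sum>i\<in>UNIV. w $ i)" for \<gamma>
    unfolding g_def using min_oracle_in_capped_simplex w
    by (auto intro: inner_capped_simplex_nonneg inner_capped_simplex_le_sum)
  have integrable_g: "integrable (perturbation \<eta>) g" "integrable (perturbation \<eta>) (\<lambda>\<gamma>. g (\<gamma> + w))"
    unfolding g_def by (auto intro: integrable_inner_min_oracle)
  note integrable = integrable_g integrable_min_value[of R] integrable_min_value[of "R + w"]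
  have "g \<gamma> \<le> (g \<gamma> - g (\<gamma> + w)) + (min_value M (R + w + \<gamma>) - min_value M (R + \<gamma>))" for \<gamma>
    using inner_min_oracle_le_min_value_diff[of w "R + \<gamma>"] by (simp add: g_def ac_simps)
  then have "(\<integral>\<gamma>. g \<gamma> \<partial>perturbation \<eta>)
      \<le> (\<integral>\<gamma>. (g \<gamma> - g (\<gamma> + w)) + (min_value M (R + w + \<gamma>) - min_value M (R + \<gamma>)) \<partial>perturbation \<eta>)"
    using integrable by (intro integral_mono) auto
  also have "\<dots> = ((\<integral>\<gamma>. g \<gamma> \<partial>perturbation \<eta>) - (\<integral>\<gamma>. g (\<gamma> + w) \<partial>perturbation \<eta>))
      + (smoothed_min (R + w) - smoothed_min R)"
    unfolding smoothed_min_def using integrable by simp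
  also have "\<dots> \<le> (\<Sum>i\<in>UNIV. w $ i) * (\<Sum>i\<in>UNIV. w $ i) / \<eta> + (smoothed_min (R + w) - smoothed_min R)"
    using integral_perturbation_shift_le[OF eta_pos g_measurable g_bounds w] by simp
  finally show ?thesis
    by (simp add: g_def power2_eq_square)
qed

definition potential :: "real^'n \<Rightarrow> real^'n \<Rightarrow> real" where
  "potential x R = R \<bullet> x + real C * \<eta> - smoothed_min R"

lemma potential_nonneg: "x \<in> capped_simplex C \<Longrightarrow> 0 \<le> potential x R"
  using smoothed_min_le by (simp add: potential_def)

lemma borel_measurable_potential [measurable]: "potential x \<in> borel_measurable borel"
  unfolding potential_def by measurable

end

section \<open>The sampling estimator\<close>

definition samples :: "nat \<Rightarrow> nat \<Rightarrow> nat set set" where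
  "samples B l = {S. S \<subseteq> {..<B} \<and> card S = l}"

lemma finite_samples: "finite (samples B l)"
  unfolding samples_def by (rule finite_subset[of _ "Pow {..<B}"]) auto

lemma samples_nonempty: "l \<le> B \<Longrightarrow> samples B l \<noteq> {}"
  by (auto simp: samples_def intro!: exI[of _ "{..<l}"])

lemma card_samples: "card (samples B l) = B choose l"
  unfolding samples_def by (simp add: n_subsets)

lemma card_samples_containing:
  assumes "j < B" and "0 < l"
  shows "card {S \<in> samples B l. j \<in> S} = (B - 1) choose (l - 1)"
proof -
  define T where "T = {S. S \<subseteq> {..<B} - {j} \<and> card S = l - 1}"
  have "{S \<in> samples B l. j \<in> S} = insert j ` T"
  proof (intro equalityI subsetI)
    fix S assume S: "S \<in> {S \<in> samples B l. j \<in> S}"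
    then have "finite S" by (auto simp: samples_def finite_subset)
    with S have "S - {j} \<in> T" by (auto simp: samples_def T_def card_Diff_singleton)
    with S show "S \<in> insert j ` T" by (auto intro!: image_eqI[of _ _ "S - {j}"])
  next
    fix S assume "S \<in> insert j ` T"
    then obtain U where "S = insert j U" "U \<subseteq> {..<B} - {j}" "card U = l - 1"
      by (auto simp: T_def)
    moreover have "finite U" using \<open>U \<subseteq> {..<B} - {j}\<close> by (rule finite_subset) simp
    moreover have "j \<notin> U" using \<open>U \<subseteq> {..<B} - {j}\<close> by blast
    ultimately show "S \<in> {S \<in> samples B l. j \<in> S}"
      using assms by (auto simp: samples_def)
  qed
  moreover have "inj_on (insert j) T"
    by (rule inj_onI) (auto simp: T_def insert_ident)
  ultimately have "card {S \<in> samples B l. j \<in> S} = card T"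
    by (simp add: card_image)
  also have "\<dots> = (B - 1) choose (l - 1)"
    using assms by (simp add: T_def n_subsets)
  finally show ?thesis .
qed

lemma sum_card_filter_samples:
  assumes "0 < l"
  shows "(\<Sum>S\<in>samples B l. card {j \<in> S. P j}) = card {j \<in> {..<B}. P j} * ((B - 1) choose (l - 1))"
proof -
  have "(\<Sum>S\<in>samples B l. card {j \<in> S. P j}) = (\<Sum>S\<in>samples B l. \<Sum>j<B. of_bool (j \<in> S \<and> P j))"
    by (intro sum.cong refl) (auto simp: samples_def sum.inter_filter[symmetric] intro!: arg_cong[where f=card])
  also have "\<dots> = (\<Sum>j<B. card {S \<in> samples B l. j \<in> S} * of_bool (P j))"
    by (subst sum.swap) (simp add: finite_samples sum.inter_filter[symmetric] of_bool_conj Int_def)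
  also have "\<dots> = (\<Sum>j<B. of_bool (P j) * ((B - 1) choose (l - 1)))"
    using assms by (simp add: card_samples_containing)
  also have "\<dots> = card {j \<in> {..<B}. P j} * ((B - 1) choose (l - 1))"
    by (simp add: sum_distrib_right[symmetric] sum.inter_filter[symmetric] Int_def)
  finally show ?thesis .
qed

lemma rhat_nonneg: "0 \<le> rhat req B l t S $ i"
  by (simp add: rhat_def)

lemma sum_rhat_components:
  assumes "S \<in> samples B l" and "0 < l"
  shows "(\<Sum>i\<in>UNIV. rhat req B l t S $ i) = real B"
proof -
  have "finite S" "card S = l"
    using assms by (auto simp: samples_def finite_subset)
  have "(\<Sum>i\<in>UNIV. card {j \<in> S. req t j = i}) = card S"
    using \<open>finite S\<close> by (subst card_UN_disjoint[symmetric]) (auto intro!: arg_cong[where f=card])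
  then have "(\<Sum>i\<in>UNIV. real (card {j \<in> S. req t j = i})) = real l"
    using \<open>card S = l\<close> by (metis of_nat_sum)
  moreover have "(\<Sum>i\<in>UNIV. rhat req B l t S $ i) = real B / real l * (\<Sum>i\<in>UNIV. real (card {j \<in> S. req t j = i}))"
    by (simp add: rhat_def sum_distrib_left)
  ultimately show ?thesis
    using assms by simp
qed

lemma sum_rhat_samples:
  assumes "0 < l" and "l \<le> B"
  shows "(\<Sum>S\<in>samples B l. rhat req B l t S) = real (card (samples B l)) *\<^sub>R req_count req B t"
proof (rule vec_eq_iff[THEN iffD2], rule allI)
  fix i
  have "l * (B choose l) = B * ((B - 1) choose (l - 1))"
    using assms(1) by (rule times_binomial_minus1_eq)
  then have binomial: "real B / real l * real ((B - 1) choose (l - 1)) = real (B choose l)"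
    using assms(1) by (simp add: field_simps flip: of_nat_mult)
  have "(\<Sum>S\<in>samples B l. rhat req B l t S) $ i
      = real B / real l * real (\<Sum>S\<in>samples B l. card {j \<in> S. req t j = i})"
    by (simp add: rhat_def sum_component sum_distrib_left)
  also have "\<dots> = real B / real l * real ((B - 1) choose (l - 1)) * real (card {j \<in> {..<B}. req t j = i})"
    using sum_card_filter_samples[OF assms(1), where P="\<lambda>j. req t j = i"] by simp
  also have "\<dots> = (real (card (samples B l)) *\<^sub>R req_count req B t) $ i"
    unfolding binomial by (simp add: req_count_def card_samples lessThan_def)
  finally show "(\<Sum>S\<in>samples B l. rhat req B l t S) $ i = (real (card (samples B l)) *\<^sub>R req_count req B t) $ i" .
qed

section \<open>Regret of NFPL\<close>

text \<open>Since \<open>PiM {} N\<close> is the point mass at \<open>\<lambda>_. undefined\<close>, the initial value \<open>\<Psi> 1\<close> is taken there.\<close>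
lemma nn_integral_PiM_potential_le:
  fixes N :: "'a measure" and \<Psi> :: "nat \<Rightarrow> (nat \<Rightarrow> 'a) \<Rightarrow> ennreal"
  assumes N: "prob_space N"
    and measurable: "\<And>k. \<Psi> (Suc k) \<in> borel_measurable (PiM {1..k} (\<lambda>_. N))"
    and step: "\<And>k \<xi>. (\<integral>\<^sup>+y. \<Psi> (Suc (Suc k)) (\<xi>(Suc k := y)) \<partial>N) \<le> \<Psi> (Suc k) \<xi> + c (Suc k)"
  shows "(\<integral>\<^sup>+\<xi>. \<Psi> (Suc n) \<xi> \<partial>PiM {1..n} (\<lambda>_. N)) \<le> \<Psi> 1 (\<lambda>_. undefined) + (\<Sum>t\<in>{1..n}. c t)"
proof (induction n)
  case 0
  show ?case by (simp add: PiM_empty nn_integral_count_space_finite)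
next
  case (Suc n)
  interpret N: prob_space N by (rule N)
  interpret product_sigma_finite "\<lambda>_. N"
    by (simp add: product_sigma_finite_def N.sigma_finite_measure_axioms)
  interpret P: prob_space "PiM {1..n} (\<lambda>_. N)"
    by (rule prob_space_PiM) (rule N)
  have "{1..Suc n} = insert (Suc n) {1..n}" by auto
  then have "(\<integral>\<^sup>+\<xi>. \<Psi> (Suc (Suc n)) \<xi> \<partial>PiM {1..Suc n} (\<lambda>_. N))
      = (\<integral>\<^sup>+\<xi>. \<integral>\<^sup>+y. \<Psi> (Suc (Suc n)) (\<xi>(Suc n := y)) \<partial>N \<partial>PiM {1..n} (\<lambda>_. N))"
    using measurable[of "Suc n"] by (simp add: product_nn_integral_insert)
  also have "\<dots> \<le> (\<integral>\<^sup>+\<xi>. \<Psi> (Suc n) \<xi> + c (Suc n) \<partial>PiM {1..n} (\<lambda>_. N))"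
    by (intro nn_integral_mono step)
  also have "\<dots> = (\<integral>\<^sup>+\<xi>. \<Psi> (Suc n) \<xi> \<partial>PiM {1..n} (\<lambda>_. N)) + c (Suc n)"
    using measurable[of n] P.emeasure_space_1 by (simp add: nn_integral_add)
  also have "\<dots> \<le> \<Psi> 1 (\<lambda>_. undefined) + (\<Sum>t\<in>{1..Suc n}. c t)"
    using Suc.IH by (simp add: add.assoc add_right_mono)
  finally show ?case .
qed

locale nfpl = smoothed_min_oracle C M \<eta>
  for C :: nat and M :: "real^'n::finite \<Rightarrow> real^'n" and \<eta> :: real +
  fixes req :: "nat \<Rightarrow> nat \<Rightarrow> 'n" and B l :: nat
  assumes sample_size: "0 < l" "l \<le> B"
begin

abbreviation slot :: "(nat set \<times> (real^'n)) measure" where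
  "slot \<equiv> slot_measure B l \<eta>"

lemma slot_eq: "slot = measure_pmf (pmf_of_set (samples B l)) \<Otimes>\<^sub>M perturbation \<eta>"
  by (simp add: slot_measure_def sample_pmf_def samples_def perturbation_def cube_def)

sublocale slot: prob_space slot
  unfolding slot_eq by (intro prob_space_pair prob_space_measure_pmf perturbation.prob_space_axioms)

lemma measurable_slot_fst: "(\<lambda>y. f (fst y)) \<in> borel_measurable slot"
  unfolding slot_eq by (rule measurable_compose[OF measurable_fst]) simp

lemma measurable_slot_snd: "f \<in> borel_measurable borel \<Longrightarrow> (\<lambda>y. f (snd y)) \<in> borel_measurable slot"
  unfolding slot_eq by (rule measurable_compose[OF measurable_snd]) simp

lemma nn_integral_slot_fst:
  "(\<integral>\<^sup>+y. f (fst y) \<partial>slot) = (\<Sum>S\<in>samples B l. f S) / of_nat (card (samples B l))"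
proof -
  have "(\<integral>\<^sup>+y. f (fst y) \<partial>slot) = (\<integral>\<^sup>+S. f S \<partial>measure_pmf (pmf_of_set (samples B l)))"
    using measurable_slot_fst[of f] perturbation.emeasure_space_1 unfolding slot_eq
    by (subst perturbation.nn_integral_fst[symmetric]) simp_all
  also have "\<dots> = (\<Sum>S\<in>samples B l. f S) / of_nat (card (samples B l))"
    using sample_size by (simp add: nn_integral_pmf_of_set finite_samples samples_nonempty)
  finally show ?thesis .
qed

lemma nn_integral_slot_snd:
  "f \<in> borel_measurable borel \<Longrightarrow> (\<integral>\<^sup>+y. f (snd y) \<partial>slot) = (\<integral>\<^sup>+\<gamma>. f \<gamma> \<partial>perturbation \<eta>)"
  unfolding slot_eq
  by (subst perturbation.nn_integral_fst[symmetric]) (auto simp: measure_pmf.emeasure_space_1)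

lemma average_inner_rhat:
  "(\<Sum>S\<in>samples B l. rhat req B l t S \<bullet> y) / real (card (samples B l)) = req_count req B t \<bullet> y"
  using sample_size finite_samples samples_nonempty
  by (simp add: inner_sum_left[symmetric] sum_rhat_samples card_gt_0_iff)

lemma expected_loss_le_smoothed_min_increment:
  "(\<integral>\<gamma>. req_count req B t \<bullet> M (R + \<gamma>) \<partial>perturbation \<eta>)
     \<le> (\<Sum>S\<in>samples B l. smoothed_min (R + rhat req B l t S) - smoothed_min R) / real (card (samples B l))
        + real B ^ 2 / \<eta>"
proof -
  define n where "n = real (card (samples B l))"
  have "n > 0"
    using sample_size finite_samples samples_nonempty by (simp add: n_def card_gt_0_iff)
  have "(\<integral>\<gamma>. req_count req B t \<bullet> M (R + \<gamma>) \<partial>perturbation \<eta>)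
      = (\<Sum>S\<in>samples B l. (\<integral>\<gamma>. rhat req B l t S \<bullet> M (R + \<gamma>) \<partial>perturbation \<eta>)) / n"
    unfolding average_inner_rhat[symmetric, of t, folded n_def]
    by (simp add: integrable_inner_min_oracle)
  also have "\<dots> \<le> (\<Sum>S\<in>samples B l. smoothed_min (R + rhat req B l t S) - smoothed_min R + real B ^ 2 / \<eta>) / n"
    using \<open>n > 0\<close> sample_size
    by (intro divide_right_mono sum_mono order_trans[OF expected_inner_min_oracle_le])
      (auto simp: rhat_nonneg sum_rhat_components)
  also have "\<dots> = (\<Sum>S\<in>samples B l. smoothed_min (R + rhat req B l t S) - smoothed_min R) / n + real B ^ 2 / \<eta>"
    using \<open>n > 0\<close> by (simp add: sum.distrib add_divide_distrib n_def)
  finally show ?thesis unfolding n_def .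
qed

lemma inner_req_count_nonneg: "y \<in> capped_simplex C \<Longrightarrow> 0 \<le> req_count req B t \<bullet> y"
  by (rule inner_capped_simplex_nonneg) (auto simp: req_count_def)

lemma expected_loss_plus_average_potential_le:
  assumes "x \<in> capped_simplex C"
  shows "(\<integral>\<gamma>. req_count req B t \<bullet> M (R + \<gamma>) \<partial>perturbation \<eta>)
           + (\<Sum>S\<in>samples B l. potential x (R + rhat req B l t S)) / real (card (samples B l))
         \<le> potential x R + req_count req B t \<bullet> x + real B ^ 2 / \<eta>"
proof -
  let ?rhat = "rhat req B l t"
  define n where "n = real (card (samples B l))"
  have "n > 0"
    using sample_size finite_samples samples_nonempty by (simp add: n_def card_gt_0_iff)
  have "(\<Sum>S\<in>samples B l. potential x (R + ?rhat S)) / n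
      = R \<bullet> x + req_count req B t \<bullet> x + real C * \<eta> - (\<Sum>S\<in>samples B l. smoothed_min (R + ?rhat S)) / n"
    using \<open>n > 0\<close> average_inner_rhat[of t x]
    by (simp add: potential_def sum_subtractf sum.distrib inner_add_left n_def diff_divide_distrib
        add_divide_distrib)
  moreover have "(\<Sum>S\<in>samples B l. smoothed_min (R + ?rhat S) - smoothed_min R) / n
      = (\<Sum>S\<in>samples B l. smoothed_min (R + ?rhat S)) / n - smoothed_min R"
    using \<open>n > 0\<close> by (simp add: sum_subtractf diff_divide_distrib n_def)
  ultimately show ?thesis
    using expected_loss_le_smoothed_min_increment[of t R] by (simp add: potential_def n_def)
qed

lemma nn_integral_slot_step:
  assumes x: "x \<in> capped_simplex C"
  shows "(\<integral>\<^sup>+y. ennreal (req_count req B t \<bullet> M (R + snd y) + potential x (R + rhat req B l t (fst y))) \<partial>slot)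
           \<le> ennreal (potential x R + req_count req B t \<bullet> x + real B ^ 2 / \<eta>)"
proof -
  let ?r = "req_count req B t" and ?rhat = "rhat req B l t"
  define n where "n = real (card (samples B l))"
  have "n > 0"
    using sample_size finite_samples samples_nonempty by (simp add: n_def card_gt_0_iff)
  have loss_nonneg: "0 \<le> ?r \<bullet> M z" for z
    by (rule inner_req_count_nonneg[OF min_oracle_in_capped_simplex])
  have "(\<integral>\<^sup>+y. ennreal (?r \<bullet> M (R + snd y)) \<partial>slot) = ennreal (\<integral>\<gamma>. ?r \<bullet> M (R + \<gamma>) \<partial>perturbation \<eta>)"
    using loss_nonneg
    by (subst nn_integral_slot_snd) (auto intro!: nn_integral_eq_integral integrable_inner_min_oracle)
  moreover have "(\<Sum>S\<in>samples B l. ennreal (potential x (R + ?rhat S)))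
      = ennreal (\<Sum>S\<in>samples B l. potential x (R + ?rhat S))"
    using potential_nonneg[OF x] by (rule sum_ennreal)
  then have "(\<integral>\<^sup>+y. ennreal (potential x (R + ?rhat (fst y))) \<partial>slot)
      = ennreal ((\<Sum>S\<in>samples B l. potential x (R + ?rhat S)) / n)"
    using \<open>n > 0\<close> potential_nonneg[OF x]
    by (subst nn_integral_slot_fst[where f="\<lambda>S. ennreal (potential x (R + ?rhat S))"])
      (simp add: n_def sum_nonneg divide_ennreal ennreal_of_nat_eq_real_of_nat)
  moreover have "(\<integral>\<^sup>+y. ennreal (?r \<bullet> M (R + snd y) + potential x (R + ?rhat (fst y))) \<partial>slot)
      = (\<integral>\<^sup>+y. ennreal (?r \<bullet> M (R + snd y)) \<partial>slot) + (\<integral>\<^sup>+y. ennreal (potential x (R + ?rhat (fst y))) \<partial>slot)"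
    using loss_nonneg potential_nonneg[OF x]
    by (subst nn_integral_add[symmetric])
      (auto intro!: measurable_slot_fst measurable_slot_snd nn_integral_cong simp: ennreal_plus)
  moreover have "0 \<le> (\<integral>\<gamma>. ?r \<bullet> M (R + \<gamma>) \<partial>perturbation \<eta>)"
    using loss_nonneg by (simp add: integral_nonneg_AE)
  moreover have "0 \<le> (\<Sum>S\<in>samples B l. potential x (R + ?rhat S)) / n"
    using potential_nonneg[OF x] \<open>n > 0\<close> by (simp add: sum_nonneg)
  ultimately show ?thesis
    using expected_loss_plus_average_potential_le[OF x, of t R]
    by (simp add: n_def ennreal_leI flip: ennreal_plus)
qed

definition cumulative_estimate :: "nat \<Rightarrow> (nat \<Rightarrow> nat set \<times> (real^'n)) \<Rightarrow> real^'n" where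
  "cumulative_estimate t \<xi> = (\<Sum>s\<in>{1..<t}. rhat req B l s (fst (\<xi> s)))"

definition loss :: "nat \<Rightarrow> (nat \<Rightarrow> nat set \<times> (real^'n)) \<Rightarrow> real" where
  "loss t \<xi> = req_count req B t \<bullet> nfpl_decision M req B l t \<xi>"

lemma loss_eq: "loss t \<xi> = req_count req B t \<bullet> M (cumulative_estimate t \<xi> + snd (\<xi> t))"
  by (simp add: loss_def nfpl_decision_def cumulative_estimate_def)

lemma loss_nonneg: "0 \<le> loss t \<xi>"
  unfolding loss_eq by (rule inner_req_count_nonneg[OF min_oracle_in_capped_simplex])

lemma cumulative_estimate_fun_upd: "t \<le> s \<Longrightarrow> cumulative_estimate t (\<xi>(s := y)) = cumulative_estimate t \<xi>"
  unfolding cumulative_estimate_def by (intro sum.cong) auto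

lemma cumulative_estimate_Suc_fun_upd:
  assumes "0 < t"
  shows "cumulative_estimate (Suc t) (\<xi>(t := y)) = cumulative_estimate t \<xi> + rhat req B l t (fst y)"
proof -
  have "{1..<Suc t} = insert t {1..<t}"
    using assms by auto
  then show ?thesis
    using cumulative_estimate_fun_upd[of t t \<xi> y]
    by (simp add: cumulative_estimate_def add.commute)
qed

lemma loss_fun_upd: "s < t \<Longrightarrow> loss s (\<xi>(t := y)) = loss s \<xi>"
  by (simp add: loss_eq cumulative_estimate_fun_upd)

lemma loss_fun_upd_same: "loss t (\<xi>(t := y)) = req_count req B t \<bullet> M (cumulative_estimate t \<xi> + snd y)"
  by (simp add: loss_eq cumulative_estimate_fun_upd)

lemma measurable_cumulative_estimate:
  assumes "{1..<t} \<subseteq> I"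
  shows "cumulative_estimate t \<in> borel_measurable (PiM I (\<lambda>_. slot))"
  unfolding cumulative_estimate_def
proof (rule borel_measurable_sum)
  fix s assume "s \<in> {1..<t}"
  with assms show "(\<lambda>\<xi>. rhat req B l s (fst (\<xi> s))) \<in> borel_measurable (PiM I (\<lambda>_. slot))"
    by (intro measurable_compose[where f="\<lambda>\<xi>. \<xi> s", OF measurable_component_singleton measurable_slot_fst])
      auto
qed

lemma measurable_loss:
  assumes "t \<in> I" and "{1..<t} \<subseteq> I"
  shows "loss t \<in> borel_measurable (PiM I (\<lambda>_. slot))"
proof -
  have "(\<lambda>\<xi>. snd (\<xi> t)) \<in> borel_measurable (PiM I (\<lambda>_. slot))"
    using assms(1)
    by (intro measurable_compose[where f="\<lambda>\<xi>. \<xi> t", OF measurable_component_singleton measurable_slot_snd])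
      auto
  with measurable_cumulative_estimate[OF assms(2)] show ?thesis
    unfolding loss_eq[abs_def] by measurable
qed

definition loss_plus_potential :: "real^'n \<Rightarrow> nat \<Rightarrow> (nat \<Rightarrow> nat set \<times> (real^'n)) \<Rightarrow> ennreal" where
  "loss_plus_potential x t \<xi> = ennreal ((\<Sum>s\<in>{1..<t}. loss s \<xi>) + potential x (cumulative_estimate t \<xi>))"

lemma measurable_loss_plus_potential:
  "loss_plus_potential x (Suc k) \<in> borel_measurable (PiM {1..k} (\<lambda>_. slot))"
  unfolding loss_plus_potential_def[abs_def]
  by (intro measurable_compose[OF _ measurable_ennreal] borel_measurable_add borel_measurable_sum
      measurable_loss measurable_compose[OF measurable_cumulative_estimate borel_measurable_potential])
    auto

lemma loss_plus_potential_Suc_fun_upd: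
  assumes x: "x \<in> capped_simplex C" and "0 < t"
  shows "loss_plus_potential x (Suc t) (\<xi>(t := y))
           = ennreal (\<Sum>s\<in>{1..<t}. loss s \<xi>)
             + ennreal (req_count req B t \<bullet> M (cumulative_estimate t \<xi> + snd y)
                 + potential x (cumulative_estimate t \<xi> + rhat req B l t (fst y)))"
proof -
  have "{1..<Suc t} = insert t {1..<t}"
    using \<open>0 < t\<close> by auto
  then have "(\<Sum>s\<in>{1..<Suc t}. loss s (\<xi>(t := y)))
      = (\<Sum>s\<in>{1..<t}. loss s \<xi>) + req_count req B t \<bullet> M (cumulative_estimate t \<xi> + snd y)"
    by (simp add: loss_fun_upd loss_fun_upd_same)
  moreover have "0 \<le> (\<Sum>s\<in>{1..<t}. loss s \<xi>)"
    by (simp add: sum_nonneg loss_nonneg)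
  ultimately show ?thesis
    using potential_nonneg[OF x] inner_req_count_nonneg[OF min_oracle_in_capped_simplex]
    by (simp add: loss_plus_potential_def cumulative_estimate_Suc_fun_upd[OF \<open>0 < t\<close>]
        add.assoc flip: ennreal_plus)
qed

lemma nn_integral_loss_plus_potential_step:
  assumes x: "x \<in> capped_simplex C" and "0 < t"
  shows "(\<integral>\<^sup>+y. loss_plus_potential x (Suc t) (\<xi>(t := y)) \<partial>slot)
           \<le> loss_plus_potential x t \<xi> + ennreal (req_count req B t \<bullet> x + real B ^ 2 / \<eta>)"
proof -
  let ?r = "req_count req B t" and ?a = "\<Sum>s\<in>{1..<t}. loss s \<xi>" and ?R = "cumulative_estimate t \<xi>"
  have "(\<integral>\<^sup>+y. loss_plus_potential x (Suc t) (\<xi>(t := y)) \<partial>slot)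
      = ennreal ?a + (\<integral>\<^sup>+y. ennreal (?r \<bullet> M (?R + snd y) + potential x (?R + rhat req B l t (fst y))) \<partial>slot)"
    unfolding loss_plus_potential_Suc_fun_upd[OF assms]
  proof (subst nn_integral_add)
    show "(\<lambda>y. ennreal (?r \<bullet> M (?R + snd y) + potential x (?R + rhat req B l t (fst y)))) \<in> borel_measurable slot"
      by (intro measurable_compose[OF _ measurable_ennreal] borel_measurable_add measurable_slot_fst
          measurable_slot_snd[where f="\<lambda>\<gamma>. ?r \<bullet> M (?R + \<gamma>)"]) measurable
  qed (auto simp: slot.emeasure_space_1)
  also have "\<dots> \<le> ennreal ?a + ennreal (potential x ?R + ?r \<bullet> x + real B ^ 2 / \<eta>)"
    using nn_integral_slot_step[OF x] by (rule add_left_mono)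
  also have "\<dots> = loss_plus_potential x t \<xi> + ennreal (?r \<bullet> x + real B ^ 2 / \<eta>)"
    using potential_nonneg[OF x] inner_req_count_nonneg[OF x] eta_pos
    by (simp add: loss_plus_potential_def ennreal_plus add.assoc sum_nonneg loss_nonneg)
  finally show ?thesis .
qed

lemma expected_total_loss_le:
  assumes x: "x \<in> capped_simplex C"
  shows "(\<integral>\<xi>. (\<Sum>t\<in>{1..T}. loss t \<xi>) \<partial>nfpl_space B l \<eta> T)
           \<le> (\<Sum>t\<in>{1..T}. req_count req B t \<bullet> x) + real C * \<eta> + real T * (real B ^ 2 / \<eta>)"
proof -
  let ?P = "PiM {1..T} (\<lambda>_. slot)"
  let ?bound = "(\<Sum>t\<in>{1..T}. req_count req B t \<bullet> x + real B ^ 2 / \<eta>)"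
  have bound_nonneg: "0 \<le> ?bound"
    using inner_req_count_nonneg[OF x] eta_pos by (intro sum_nonneg) simp
  have "(\<integral>\<^sup>+\<xi>. ennreal (\<Sum>t\<in>{1..T}. loss t \<xi>) \<partial>?P) \<le> (\<integral>\<^sup>+\<xi>. loss_plus_potential x (Suc T) \<xi> \<partial>?P)"
    unfolding loss_plus_potential_def using potential_nonneg[OF x]
    by (intro nn_integral_mono ennreal_leI) (simp add: atLeastLessThanSuc_atLeastAtMost)
  also have "\<dots> \<le> loss_plus_potential x 1 (\<lambda>_. undefined)
      + (\<Sum>t\<in>{1..T}. ennreal (req_count req B t \<bullet> x + real B ^ 2 / \<eta>))"
    using slot.prob_space_axioms measurable_loss_plus_potential
    by (rule nn_integral_PiM_potential_le) (rule nn_integral_loss_plus_potential_step[OF x zero_less_Suc])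
  also have "\<dots> = ennreal (potential x 0) + ennreal ?bound"
    using inner_req_count_nonneg[OF x] eta_pos
    by (subst sum_ennreal) (auto simp: loss_plus_potential_def cumulative_estimate_def)
  also have "\<dots> = ennreal (potential x 0 + ?bound)"
    using potential_nonneg[OF x] bound_nonneg by (rule ennreal_plus[symmetric])
  finally have "(\<integral>\<^sup>+\<xi>. ennreal (\<Sum>t\<in>{1..T}. loss t \<xi>) \<partial>?P) \<le> ennreal (potential x 0 + ?bound)" .
  moreover have "(\<lambda>\<xi>. \<Sum>t\<in>{1..T}. loss t \<xi>) \<in> borel_measurable ?P"
    by (intro borel_measurable_sum measurable_loss) auto
  ultimately have "(\<integral>\<xi>. (\<Sum>t\<in>{1..T}. loss t \<xi>) \<partial>?P) \<le> potential x 0 + ?bound"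
    using potential_nonneg[OF x] bound_nonneg
    by (subst integral_eq_nn_integral) (auto intro: sum_nonneg loss_nonneg enn2real_leI)
  moreover have "potential x 0 \<le> real C * \<eta>"
    using smoothed_min_zero_nonneg by (simp add: potential_def)
  ultimately show ?thesis
    by (simp add: nfpl_space_def sum.distrib)
qed

lemma nfpl_regret_le:
  assumes "C \<le> CARD('n)"
  shows "nfpl_regret C M req B l \<eta> T \<le> real C * \<eta> + real T * (real B ^ 2 / \<eta>)"
proof -
  have "(\<integral>\<xi>. (\<Sum>t\<in>{1..T}. loss t \<xi>) \<partial>nfpl_space B l \<eta> T) - (real C * \<eta> + real T * (real B ^ 2 / \<eta>))
      \<le> (INF x\<in>capped_simplex C. \<Sum>t\<in>{1..T}. req_count req B t \<bullet> x)"
    using capped_simplex_nonempty[OF assms] expected_total_loss_le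
    by (intro cINF_greatest) (auto simp: algebra_simps)
  then show ?thesis
    by (simp add: nfpl_regret_def loss_def)
qed

end

lemma tuned_regret_bound:
  fixes B C T :: nat
  assumes "0 < C" and "0 < T"
  defines "\<eta> \<equiv> real B * sqrt (real T / (2 * real C))"
  shows "real C * \<eta> + real T * (real B ^ 2 / \<eta>) \<le> 2 * sqrt 2 * real B * sqrt (real C * real T)"
proof (cases "B = 0")
  case False
  define s where "s = sqrt (real T / (2 * real C))"
  have "0 < s" and s2: "s\<^sup>2 = real T / (2 * real C)"
    using assms by (simp_all add: s_def)
  define L where "L = real C * s + real T / s"
  have "L\<^sup>2 = (real C)\<^sup>2 * s\<^sup>2 + 2 * real C * real T + (real T)\<^sup>2 / s\<^sup>2"
    using \<open>0 < s\<close> by (simp add: L_def power2_eq_square field_simps)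
  also have "\<dots> = 9 / 2 * (real C * real T)"
    unfolding s2 using assms by (simp add: power2_eq_square field_simps)
  also have "\<dots> \<le> (2 * sqrt 2 * sqrt (real C * real T))\<^sup>2"
    by (simp add: power_mult_distrib)
  finally have "L \<le> 2 * sqrt 2 * sqrt (real C * real T)"
    by (rule power2_le_imp_le) simp
  have "real C * \<eta> + real T * (real B ^ 2 / \<eta>) = real B * L"
    using False \<open>0 < s\<close> by (simp add: \<eta>_def L_def flip: s_def) (simp add: power2_eq_square field_simps)
  also have "\<dots> \<le> real B * (2 * sqrt 2 * sqrt (real C * real T))"
    using \<open>L \<le> 2 * sqrt 2 * sqrt (real C * real T)\<close> by (rule mult_left_mono) simp
  finally show ?thesis
    by (simp add: ac_simps)
qed (simp add: \<eta>_def)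

theorem corollary2:
  fixes req :: "nat \<Rightarrow> nat \<Rightarrow> 'n::finite"
    and M :: "real^'n \<Rightarrow> real^'n"
    and C B l T :: nat
  assumes "1 \<le> C" and "2 * C < CARD('n)"
    and "0 < l" and "l < B"
    and "is_min_oracle C M"
    and "M \<in> borel_measurable borel"
  shows "nfpl_regret C M req B l (real B * sqrt (real T / (2 * real C))) T
           \<le> 2 * sqrt 2 * real B * sqrt (real C * real T)"
proof (cases "T = 0")
  case True
  \<comment> \<open>then \<open>\<eta> = 0\<close> and the perturbation degenerates, but the regret is trivially \<open>0\<close>\<close>
  then show ?thesis
    using capped_simplex_nonempty[of C, where 'n='n] assms(2) by (simp add: nfpl_regret_def)
next
  case False
  define \<eta> where "\<eta> = real B * sqrt (real T / (2 * real C))"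
  have "0 < \<eta>"
    using assms False by (simp add: \<eta>_def)
  with assms interpret nfpl C M \<eta> req B l
    by unfold_locales auto
  \<comment> \<open>of \<open>2 * C < CARD('n)\<close> only \<open>C \<le> CARD('n)\<close>, i.e. a nonempty capped simplex, is used\<close>
  have "nfpl_regret C M req B l \<eta> T \<le> real C * \<eta> + real T * (real B ^ 2 / \<eta>)"
    using assms(2) by (intro nfpl_regret_le) simp
  also have "\<dots> \<le> 2 * sqrt 2 * real B * sqrt (real C * real T)"
    unfolding \<eta>_def using assms False by (intro tuned_regret_bound) auto
  finally show ?thesis
    unfolding \<eta>_def .
qed

end
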